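(* Let $n\ge 1$ and $\tau\in\mathfrak S_n$. Write $\tau=m_1a_1m_2a_2\cdots m_ka_k$, where $m_1,\dots,m_k$ are the left-to-right minima of $\tau$ in order of position and each $a_i$ is the (possibly empty) factor of $\tau$ between $m_i$ and $m_{i+1}$ (or after $m_k$). Then $\tau\in\mathrm{Sort}_n(\mathrm{SC}_{1\underline{32}})$ if and only if the concatenation $\mathrm{rev}(a_1)\mathrm{rev}(a_2)\cdots\mathrm{rev}(a_k)$ is a decreasing sequence.
   Context: $\mathfrak S_n$ is the set of permutations of $\{1,\dots,n\}$; $\mathrm{rev}$ reverses a sequence. A left-to-right minimum of $\tau$ is an entry smaller than all entries to its left. A vincular pattern is a permutation with some entries underlined; a sequence contains it if it has a subsequence with the same relative order in which entries corresponding to adjacent underlined entries occupy consecutive positions. An occurrence of $1\underline{32}$ is $a_i a_j a_{j+1}$ with $i<j$ and $a_i<a_{j+1}<a_j$. For a pattern $\sigma$, the map $\mathrm{SC}_\sigma$ acts on $\tau$: read entries left to right; when the next entry $x$ is read, if pushing $x$ yields a stack whose entries read top to bottom (stack adjacency = consecutive positions) avoid $\sigma$, push $x$; otherwise pop the top stack entry to the output and repeat. At the end pop all remaining entries; the output is $\mathrm{SC}_\sigma(\tau)$. West's stack-sorting map is $s=\mathrm{SC}_{21}$. $\mathrm{Sort}_n(\mathrm{SC}_\sigma)=\{\tau\in\mathfrak S_n : s(\mathrm{SC}_\sigma(\tau))=12\cdots n\}$. *)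

theory Defs
  imports "HOL-Combinatorics.Multiset_Permutations"
begin

text \<open>Occurrence of the vincular pattern 1 underline(32): a_i a_j a_(j+1) with i<j and
  a_i < a_(j+1) < a_j.\<close>
definition contains_1_32 :: "nat list \<Rightarrow> bool" where
  "contains_1_32 xs \<longleftrightarrow>
     (\<exists>i j. i < j \<and> Suc j < length xs \<and> xs ! i < xs ! (Suc j) \<and> xs ! (Suc j) < xs ! j)"

definition contains_21 :: "nat list \<Rightarrow> bool" where
  "contains_21 xs \<longleftrightarrow> (\<exists>i j. i < j \<and> j < length xs \<and> xs ! j < xs ! i)"

text \<open>Pattern-avoiding stack machine SC. Arguments: the containment predicate of the pattern,
  the remaining input, and the stack (list head = top).\<close>
fun SC_aux :: "(nat list \<Rightarrow> bool) \<Rightarrow> nat list \<Rightarrow> nat list \<Rightarrow> nat list" where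
  "SC_aux cont [] st = st"
| "SC_aux cont (x # xs) [] = SC_aux cont xs [x]"
| "SC_aux cont (x # xs) (y # st) =
     (if \<not> cont (x # y # st) then SC_aux cont xs (x # y # st)
      else y # SC_aux cont (x # xs) st)"

definition SC :: "(nat list \<Rightarrow> bool) \<Rightarrow> nat list \<Rightarrow> nat list" where
  "SC cont \<tau> = SC_aux cont \<tau> []"

definition west_s :: "nat list \<Rightarrow> nat list" where
  "west_s = SC contains_21"

definition Sort_SC :: "nat \<Rightarrow> (nat list \<Rightarrow> bool) \<Rightarrow> nat list set" where
  "Sort_SC n cont = {\<tau> \<in> permutations_of_set {1..n}. west_s (SC cont \<tau>) = [1..<n+1]}"

definition is_ltr_min :: "nat list \<Rightarrow> nat \<Rightarrow> bool" where
  "is_ltr_min xs i \<longleftrightarrow> i < length xs \<and> (\<forall>j<i. xs ! i < xs ! j)"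

definition ltr_minima :: "nat list \<Rightarrow> nat list" where
  "ltr_minima xs = [xs ! i. i \<leftarrow> [0..<length xs], is_ltr_min xs i]"

end

theory Submission
  imports Defs "HOL-Library.Sublist"
begin

text \<open>
  West's stack sort \<open>s\<close> sorts a word exactly when the word avoids 231: started with a
  sorted stack \<open>st\<close>, it outputs a sorted word from the input \<open>xs\<close> iff \<open>rev st @ xs\<close>
  avoids 231. So \<open>\<tau>\<close> is sorted by \<open>s \<circ> SC\<^sub>1\<^sub>3\<^sub>2\<close> iff \<open>SC\<^sub>1\<^sub>3\<^sub>2 \<tau>\<close> avoids 231.

  If every factor \<open>a\<^sub>i\<close> is increasing, each new left-to-right minimum pops the factor above
  it and lands on the earlier minima, so \<open>SC\<^sub>1\<^sub>3\<^sub>2 \<tau> = rev a\<^sub>1 \<dots> rev a\<^sub>k m\<^sub>k \<dots> m\<^sub>1\<close>.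
  The minima increase and \<open>m\<^sub>i\<close> lies below all of \<open>a\<^sub>i\<close>, so this word avoids 231 iff
  \<open>rev a\<^sub>1 \<dots> rev a\<^sub>k\<close> decreases. If some \<open>a\<^sub>i\<close> has a first descent \<open>x > y\<close>, then \<open>y\<close>
  comes to rest on an entry \<open>x' > y\<close> with \<open>m\<^sub>i\<close> still deeper in the stack, and these three
  entries reach the output as a 231.
\<close>

lemma sorted_wrt_subseq: "subseq xs ys \<Longrightarrow> sorted_wrt P ys \<Longrightarrow> sorted_wrt P xs"
proof (induction rule: list_emb.induct)
  case (list_emb_Cons2 x y xs ys)
  then show ?case using list_emb_set[of "(=)" xs ys] by auto
qed auto

lemma not_sorted_wrt_less_imp_descent:
  fixes xs :: "'a::linorder list"
  assumes "\<not> sorted_wrt (<) xs"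
  shows "\<exists>p x y q. xs = p @ x # y # q \<and> sorted_wrt (<) (p @ [x]) \<and> y \<le> x"
  using assms
proof (induction xs rule: induct_list012)
  case (3 x y zs)
  show ?case
  proof (cases "x < y")
    case True
    with "3.prems" have "\<not> sorted_wrt (<) (y # zs)"
      by (auto dest: less_trans[of x y])
    with "3.IH"(2) obtain p x' y' q where
      pq: "y # zs = p @ x' # y' # q" "sorted_wrt (<) (p @ [x'])" "y' \<le> x'"
      by blast
    then obtain r where "p @ [x'] = y # r"
      by (cases p) auto
    with pq(2) True have "sorted_wrt (<) ((x # p) @ [x'])"
      by (auto dest: less_trans[of x y])
    with pq show ?thesis
      by (metis append_Cons)
  next
    case False
    then show ?thesis
      by (intro exI[of _ "[]"]) auto
  qed
qed simp_all

section \<open>The pattern 231 and West's stack sort\<close>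

definition contains_231 :: "nat list \<Rightarrow> bool" where
  "contains_231 xs \<longleftrightarrow> (\<exists>a b c. a < b \<and> b < c \<and> subseq [b, c, a] xs)"

lemma contains_231_mono: "contains_231 xs \<Longrightarrow> subseq xs ys \<Longrightarrow> contains_231 ys"
  unfolding contains_231_def using subseq_order.trans by blast

lemma contains_231I: "a < b \<Longrightarrow> b < c \<Longrightarrow> subseq [b, c, a] xs \<Longrightarrow> contains_231 xs"
  unfolding contains_231_def by blast

lemma contains_231_append_Cons_Cons_cases:
  assumes "sorted (y # st)" "y < x" "contains_231 (rev st @ y # x # xs)"
  shows "contains_231 (rev st @ x # xs) \<or> (\<exists>z\<in>set xs. z < y)"
proof -
  obtain a b c where abc: "a < b" "b < c" and "subseq [b, c, a] (rev st @ y # x # xs)"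
    using assms(3) unfolding contains_231_def by blast
  then obtain l1 l2 where l: "[b, c, a] = l1 @ l2" "subseq l1 (rev st)" "subseq l2 (y # x # xs)"
    by (auto elim: subseq_appendE)
  have st_ge: "\<forall>u\<in>set st. y \<le> u" and desc: "sorted_wrt (\<ge>) (rev st)"
    using assms(1) by (auto simp: sorted_wrt_rev)
  have no_bc: "\<not> subseq (b # c # r) (rev st)" for r
    using sorted_wrt_subseq[OF _ desc, of "b # c # r"] abc by auto
  then consider "l1 = []" "subseq [b, c, a] (y # x # xs)" | "l1 = [b]" "subseq [c, a] (y # x # xs)"
    using l by (cases l1) (auto simp: Cons_eq_append_conv dest: subseq_Cons')
  then show ?thesis
  proof cases
    case 1
    show ?thesis
    proof (cases "b = y")
      case True
      then show ?thesis
        using 1 abc assms(2)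
        by (auto simp: subseq_singleton_left split: if_splits dest: subseq_Cons')
    next
      case False
      then have "subseq [b, c, a] (rev st @ x # xs)"
        using 1 by (auto intro: subseq_drop_many dest: subseq_Cons2_neq)
      then show ?thesis using abc by (auto intro: contains_231I)
    qed
  next
    case 2
    show ?thesis
    proof (cases "c = y")
      case True
      then show ?thesis using 2 l(2) abc st_ge by (auto simp: subseq_singleton_left)
    next
      case False
      then have "subseq ([b] @ [c, a]) (rev st @ x # xs)"
        using 2 l(2) by (intro list_emb_append_mono) auto
      then show ?thesis using abc by (auto intro: contains_231I)
    qed
  qed
qed

lemma contains_231_append_Cons_Cons_iff:
  assumes "sorted (y # st)" "y < x"
  shows "contains_231 (rev st @ y # x # xs) \<longleftrightarrow>
         contains_231 (rev st @ x # xs) \<or> (\<exists>z\<in>set xs. z < y)"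
proof
  assume "contains_231 (rev st @ y # x # xs)"
  with assms show "contains_231 (rev st @ x # xs) \<or> (\<exists>z\<in>set xs. z < y)"
    by (rule contains_231_append_Cons_Cons_cases)
next
  assume "contains_231 (rev st @ x # xs) \<or> (\<exists>z\<in>set xs. z < y)"
  then show "contains_231 (rev st @ y # x # xs)"
  proof
    assume "contains_231 (rev st @ x # xs)"
    then show ?thesis by (rule contains_231_mono) (simp add: subseq_append' list_emb.list_emb_Cons)
  next
    assume "\<exists>z\<in>set xs. z < y"
    then obtain z where "z \<in> set xs" "z < y" by blast
    moreover from \<open>z \<in> set xs\<close> have "subseq [y, x, z] (rev st @ y # x # xs)"
      by (simp add: subseq_drop_many subseq_singleton_left)
    ultimately show ?thesis using assms(2) by (intro contains_231I)
  qed
qed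

lemma sorted_rev_imp_not_contains_231: "sorted xs \<Longrightarrow> \<not> contains_231 (rev xs)"
  unfolding contains_231_def using sorted_wrt_subseq[of "[_, _, _]" "rev xs" "(\<ge>)"]
  by (fastforce simp: sorted_wrt_rev)

lemma not_contains_231_decreasing_increasing:
  assumes "sorted_wrt (>) xs" "sorted ys"
  shows "\<not> contains_231 (xs @ ys)"
proof
  assume "contains_231 (xs @ ys)"
  then obtain a b c where abc: "a < b" "b < c" and "subseq [b, c, a] (xs @ ys)"
    unfolding contains_231_def by blast
  then obtain l1 l2 where l: "[b, c, a] = l1 @ l2" "subseq l1 xs" "subseq l2 ys"
    by (auto elim: subseq_appendE)
  with assms have "sorted_wrt (>) l1" "sorted l2"
    using sorted_wrt_subseq by blast+
  with l(1) abc show False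
    by (cases l1) (auto simp: Cons_eq_append_conv)
qed

lemma SC_aux_mset: "mset (SC_aux cont xs st) = mset xs + mset st"
  by (induction cont xs st rule: SC_aux.induct) auto

lemma set_SC_aux: "set (SC_aux cont xs st) = set xs \<union> set st"
  using SC_aux_mset by (metis set_mset_mset set_mset_union)

lemma subseq_SC_aux: "subseq st (SC_aux cont xs st)"
proof (induction cont xs st rule: SC_aux.induct)
  case (3 cont x xs y st)
  then show ?case by (auto dest: subseq_Cons')
qed auto

lemma SC_aux_append:
  "\<exists>P S. SC_aux cont (xs @ ys) st = P @ SC_aux cont ys S \<and> set S \<subseteq> set xs \<union> set st"
proof (induction cont xs st rule: SC_aux.induct)
  case (1 cont st)
  show ?case by (intro exI[of _ "[]"] exI[of _ st]) simp
next
  case (2 cont x xs)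
  then show ?case by auto
next
  case (3 cont x xs y st)
  show ?case
  proof (cases "cont (x # y # st)")
    case False
    with "3"(1) show ?thesis by auto
  next
    case True
    with "3"(2) obtain P S where
      "SC_aux cont ((x # xs) @ ys) st = P @ SC_aux cont ys S"
      "set S \<subseteq> set (x # xs) \<union> set st"
      by blast
    with True show ?thesis by (intro exI[of _ "y # P"] exI[of _ S]) auto
  qed
qed

lemma SC_aux_push:
  "st \<noteq> [] \<Longrightarrow> \<not> cont (x # st) \<Longrightarrow> SC_aux cont (x # xs) st = SC_aux cont xs (x # st)"
  by (cases st) auto

lemma contains_21_iff: "contains_21 xs \<longleftrightarrow> \<not> sorted xs"
  unfolding contains_21_def sorted_iff_nth_mono_less by (auto simp: not_le)

lemma SC_21_sorted_iff:
  assumes "sorted st"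
  shows "sorted (SC_aux contains_21 xs st) \<longleftrightarrow> \<not> contains_231 (rev st @ xs)"
  using assms
proof (induction contains_21 xs st rule: SC_aux.induct)
  case (1 st)
  then show ?case by (simp add: sorted_rev_imp_not_contains_231)
next
  case (2 x xs)
  then show ?case by simp
next
  case (3 x xs y st)
  show ?case
  proof (cases "contains_21 (x # y # st)")
    case False
    then show ?thesis using "3"(1,3) by (simp add: contains_21_iff)
  next
    case True
    with "3"(3) have "y < x" by (auto simp: contains_21_iff)
    have "sorted (SC_aux contains_21 (x # xs) (y # st)) \<longleftrightarrow>
          (\<forall>z\<in>set xs. y \<le> z) \<and> \<not> contains_231 (rev st @ x # xs)"
      using "3"(2) True "3"(3) \<open>y < x\<close> by (auto simp: set_SC_aux)
    also have "\<dots> \<longleftrightarrow> \<not> contains_231 (rev st @ y # x # xs)"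
      using contains_231_append_Cons_Cons_iff[OF "3"(3) \<open>y < x\<close>] by (auto simp: not_le)
    finally show ?thesis by simp
  qed
qed

lemma west_s_sorted_iff: "sorted (west_s xs) \<longleftrightarrow> \<not> contains_231 xs"
  using SC_21_sorted_iff[of "[]" xs] by (simp add: west_s_def SC_def)

lemma Sort_SC_iff:
  assumes "\<tau> \<in> permutations_of_set {1..n}"
  shows "\<tau> \<in> Sort_SC n cont \<longleftrightarrow> \<not> contains_231 (SC cont \<tau>)"
proof -
  have "distinct \<tau>" "set \<tau> = set [1..<n+1]"
    using assms
    by (simp_all add: permutations_of_set_def atLeastLessThanSuc_atLeastAtMost del: upt_Suc)
  then have "mset \<tau> = mset [1..<n+1]"
    by (metis distinct_upt set_eq_iff_mset_eq_distinct)
  then have "mset (west_s (SC cont \<tau>)) = mset [1..<n+1]"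
    by (simp add: west_s_def SC_def SC_aux_mset)
  then have "west_s (SC cont \<tau>) = [1..<n+1] \<longleftrightarrow> sorted (west_s (SC cont \<tau>))"
    by (metis properties_for_sort sorted_sort_id sorted_upt)
  then show ?thesis
    using assms by (simp add: Sort_SC_def west_s_sorted_iff)
qed

section \<open>Descent bottoms and the pattern 1-32\<close>

definition descent_bottoms :: "nat list \<Rightarrow> nat set" where
  "descent_bottoms xs = {xs ! Suc j | j. Suc j < length xs \<and> xs ! Suc j < xs ! j}"

lemma descent_bottoms_Cons_Cons [simp]:
  "descent_bottoms (x # y # zs) = (if y < x then {y} else {}) \<union> descent_bottoms (y # zs)"
proof (intro set_eqI iffI)
  fix z assume "z \<in> descent_bottoms (x # y # zs)"
  then obtain j where "z = (x # y # zs) ! Suc j" "Suc j < length (x # y # zs)"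
    "(x # y # zs) ! Suc j < (x # y # zs) ! j"
    unfolding descent_bottoms_def by blast
  then show "z \<in> (if y < x then {y} else {}) \<union> descent_bottoms (y # zs)"
    by (cases j) (auto simp: descent_bottoms_def)
next
  fix z assume z: "z \<in> (if y < x then {y} else {}) \<union> descent_bottoms (y # zs)"
  show "z \<in> descent_bottoms (x # y # zs)"
  proof (cases "z \<in> descent_bottoms (y # zs)")
    case True
    then obtain i where "z = (y # zs) ! Suc i" "Suc i < length (y # zs)"
      "(y # zs) ! Suc i < (y # zs) ! i"
      unfolding descent_bottoms_def by blast
    then show ?thesis
      unfolding descent_bottoms_def by (intro CollectI exI[of _ "Suc i"]) simp
  next
    case False
    then show ?thesis
      using z unfolding descent_bottoms_def by (auto intro!: exI[of _ 0] split: if_splits)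
  qed
qed

lemma descent_bottoms_subset: "descent_bottoms xs \<subseteq> set xs"
  by (auto simp: descent_bottoms_def)

lemma descent_bottoms_empty_iff: "descent_bottoms xs = {} \<longleftrightarrow> sorted xs"
  by (auto simp: descent_bottoms_def sorted_iff_nth_Suc not_le)

lemma descent_bottoms_append_Cons:
  "descent_bottoms (xs @ y # ys) \<subseteq> set xs \<union> {y} \<union> descent_bottoms (y # ys)"
proof (induction xs)
  case (Cons x xs)
  then show ?case by (cases xs) auto
qed auto

lemma contains_1_32_Cons_iff:
  "contains_1_32 (x # xs) \<longleftrightarrow> contains_1_32 xs \<or> (\<exists>z\<in>descent_bottoms xs. x < z)"
proof
  assume "contains_1_32 (x # xs)"
  then obtain i j where ij: "i < j" "Suc j < length (x # xs)"
    "(x # xs) ! i < (x # xs) ! Suc j" "(x # xs) ! Suc j < (x # xs) ! j"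
    unfolding contains_1_32_def by blast
  then obtain j' where j': "j = Suc j'" by (cases j) auto
  show "contains_1_32 xs \<or> (\<exists>z\<in>descent_bottoms xs. x < z)"
  proof (cases i)
    case 0
    then show ?thesis using ij j' unfolding descent_bottoms_def by auto
  next
    case (Suc i')
    then show ?thesis
      using ij j' unfolding contains_1_32_def by (intro disjI1 exI[of _ i'] exI[of _ j']) auto
  qed
next
  assume "contains_1_32 xs \<or> (\<exists>z\<in>descent_bottoms xs. x < z)"
  then show "contains_1_32 (x # xs)"
  proof
    assume "contains_1_32 xs"
    then obtain i j where "i < j" "Suc j < length xs" "xs ! i < xs ! Suc j" "xs ! Suc j < xs ! j"
      unfolding contains_1_32_def by blast
    then show ?thesis
      unfolding contains_1_32_def by (intro exI[of _ "Suc i"] exI[of _ "Suc j"]) auto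
  next
    assume "\<exists>z\<in>descent_bottoms xs. x < z"
    then obtain j where "Suc j < length xs" "x < xs ! Suc j" "xs ! Suc j < xs ! j"
      unfolding descent_bottoms_def by blast
    then show ?thesis unfolding contains_1_32_def by (intro exI[of _ 0] exI[of _ "Suc j"]) auto
  qed
qed

lemma sorted_imp_not_contains_1_32: "sorted xs \<Longrightarrow> \<not> contains_1_32 xs"
  unfolding contains_1_32_def sorted_iff_nth_Suc by (metis leD)

section \<open>Runs of the 1-32-avoiding stack\<close>

text \<open>
  While the factor \<open>a\<close> after a left-to-right minimum \<open>m\<close> is
  being read, the stack is a valley \<open>rev a @ m # ms\<close>: decreasing down to \<open>m\<close>, sorted below.
\<close>

lemma descent_bottoms_valley:
  assumes "sorted (m # ms)"
  shows "descent_bottoms (rev a @ m # ms) \<subseteq> set a \<union> {m}"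
proof -
  have "descent_bottoms (m # ms) = {}"
    using assms by (simp only: descent_bottoms_empty_iff)
  then show ?thesis
    using descent_bottoms_append_Cons[of "rev a" m ms] by auto
qed

lemma not_contains_1_32_valley:
  assumes "sorted_wrt (<) (m # a)" "sorted (m # ms)"
  shows "\<not> contains_1_32 (rev a @ m # ms)"
  using assms
proof (induction a rule: rev_induct)
  case Nil
  then show ?case by (simp add: sorted_imp_not_contains_1_32)
next
  case (snoc y a)
  then have "\<forall>z\<in>set a \<union> {m}. z < y" and "sorted_wrt (<) (m # a)"
    by (auto simp: sorted_wrt_append)
  then have "\<forall>z\<in>descent_bottoms (rev a @ m # ms). \<not> y < z"
    using descent_bottoms_valley[OF snoc.prems(2), of a] by fastforce
  moreover have "\<not> contains_1_32 (rev a @ m # ms)"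
    using snoc.IH[OF \<open>sorted_wrt (<) (m # a)\<close> snoc.prems(2)] .
  ultimately show ?case
    by (simp add: contains_1_32_Cons_iff)
qed

lemma SC_1_32_push_increasing:
  assumes "sorted_wrt (<) (m # a)" "sorted (m # ms)"
  shows "SC_aux contains_1_32 (a @ xs) (m # ms) = SC_aux contains_1_32 xs (rev a @ m # ms)"
  using assms
proof (induction a arbitrary: xs rule: rev_induct)
  case Nil
  then show ?case by simp
next
  case (snoc y a)
  then have "SC_aux contains_1_32 ((a @ [y]) @ xs) (m # ms)
               = SC_aux contains_1_32 (y # xs) (rev a @ m # ms)"
    by (simp add: sorted_wrt_append)
  also have "\<dots> = SC_aux contains_1_32 xs (y # rev a @ m # ms)"
    using not_contains_1_32_valley[OF snoc.prems] by (intro SC_aux_push) auto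
  finally show ?case by simp
qed

lemma SC_1_32_new_minimum_pops:
  assumes "sorted_wrt (<) (m0 # a)" "sorted (m0 # ms)" "m < m0"
  shows "SC_aux contains_1_32 (m # xs) (rev a @ m0 # ms)
           = rev a @ SC_aux contains_1_32 xs (m # m0 # ms)"
  using assms
proof (induction a rule: rev_induct)
  case Nil
  then have "\<not> contains_1_32 (m # m0 # ms)" by (intro sorted_imp_not_contains_1_32) auto
  then show ?case by simp
next
  case (snoc x a)
  obtain q t where qt: "rev a @ m0 # ms = q # t" and q: "q \<in> set a \<union> {m0}"
    by (cases a rule: rev_cases) auto
  with snoc.prems have "m < q" "q < x" by (auto simp: sorted_wrt_append)
  then have "contains_1_32 (m # x # q # t)" by (simp add: contains_1_32_Cons_iff)
  then have "SC_aux contains_1_32 (m # xs) (x # rev a @ m0 # ms)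
               = x # SC_aux contains_1_32 (m # xs) (rev a @ m0 # ms)"
    unfolding qt by simp
  with snoc show ?case by (simp add: sorted_wrt_append)
qed

lemma SC_1_32_new_minimum_arrives:
  assumes "\<forall>z\<in>set st. m < z"
  shows "\<exists>P S. SC_aux contains_1_32 (m # xs) st = P @ SC_aux contains_1_32 xs (m # S)
               \<and> sorted (m # S)"
  using assms
proof (induction st)
  case Nil
  then show ?case by (intro exI[of _ "[]"] exI[of _ "[]"]) simp
next
  case (Cons y st)
  show ?case
  proof (cases "contains_1_32 (m # y # st)")
    case True
    from Cons obtain P S where
      "SC_aux contains_1_32 (m # xs) st = P @ SC_aux contains_1_32 xs (m # S)" "sorted (m # S)"
      by auto
    with True show ?thesis by (intro exI[of _ "y # P"] exI[of _ S]) auto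
  next
    case False
    then have "descent_bottoms (y # st) = {}"
      using Cons.prems descent_bottoms_subset[of "y # st"] by (auto simp: contains_1_32_Cons_iff)
    then have "sorted (m # y # st)"
      using Cons.prems by (auto simp: descent_bottoms_empty_iff less_imp_le)
    with False show ?thesis by (intro exI[of _ "[]"] exI[of _ "y # st"]) auto
  qed
qed

lemma not_contains_1_32_push_onto_valley:
  assumes "sorted_wrt (<) (m # a @ [x])" "sorted (m # ms)" "\<forall>z\<in>set a \<union> {m}. z \<le> y"
  shows "\<not> contains_1_32 (y # x # rev a @ m # ms)"
proof -
  have "descent_bottoms (x # rev a @ m # ms) \<subseteq> set a \<union> {m}"
  proof (cases a rule: rev_cases)
    case Nil
    then show ?thesis
      using descent_bottoms_empty_iff[THEN iffD2, OF assms(2)] by simp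
  next
    case (snoc a' x')
    then show ?thesis
      using descent_bottoms_valley[OF assms(2), of a] by auto
  qed
  with assms(3) have "\<forall>z\<in>descent_bottoms (x # rev a @ m # ms). \<not> y < z"
    by fastforce
  moreover have "\<not> contains_1_32 (rev (a @ [x]) @ m # ms)"
    using assms(1,2) by (intro not_contains_1_32_valley) auto
  ultimately show ?thesis
    unfolding contains_1_32_Cons_iff[of y] by simp
qed

lemma SC_1_32_descent:
  assumes "sorted_wrt (<) (m # a @ [x])" "sorted (m # ms)" "m < y" "y < x"
  shows "\<exists>P x' S. SC_aux contains_1_32 (y # xs) (x # rev a @ m # ms)
                   = P @ SC_aux contains_1_32 xs (y # x' # S) \<and> y < x' \<and> m \<in> set S"
  using assms
proof (induction a arbitrary: x rule: rev_induct)
  case Nil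
  then have "\<not> contains_1_32 (y # x # m # ms)"
    using not_contains_1_32_push_onto_valley[of m "[]" x ms y] by simp
  with Nil.prems show ?case
    by (intro exI[of _ "[]"] exI[of _ x] exI[of _ "m # ms"]) simp
next
  case (snoc x0 a)
  have sorted_a: "sorted_wrt (<) (m # a @ [x0])" "x0 < x"
    using snoc.prems(1) by (auto simp: sorted_wrt_append)
  show ?case
  proof (cases "y < x0")
    case True
    then have "contains_1_32 (y # x # x0 # rev a @ m # ms)"
      unfolding contains_1_32_Cons_iff[of y] using sorted_a(2) by simp
    moreover obtain P x' S where
      "SC_aux contains_1_32 (y # xs) (x0 # rev a @ m # ms)
         = P @ SC_aux contains_1_32 xs (y # x' # S)"
      "y < x'" "m \<in> set S"
      using snoc.IH[OF sorted_a(1) snoc.prems(2,3) True] by blast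
    ultimately show ?thesis
      by (intro exI[of _ "x # P"] exI[of _ x'] exI[of _ S]) simp
  next
    case False
    with sorted_a(1) snoc.prems(3) have "\<forall>z\<in>set (a @ [x0]) \<union> {m}. z \<le> y"
      by (auto simp: sorted_wrt_append)
    then have "\<not> contains_1_32 (y # x # rev (a @ [x0]) @ m # ms)"
      using snoc.prems(1,2) by (intro not_contains_1_32_push_onto_valley) auto
    with snoc.prems show ?thesis
      by (intro exI[of _ "[]"] exI[of _ x] exI[of _ "x0 # rev a @ m # ms"]) simp
  qed
qed

section \<open>Factorisation at the left-to-right minima\<close>

abbreviation flat_blocks :: "(nat \<times> nat list) list \<Rightarrow> nat list" where
  "flat_blocks B \<equiv> concat (map (\<lambda>(m, a). m # a) B)"

abbreviation rev_tails :: "(nat \<times> nat list) list \<Rightarrow> nat list" where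
  "rev_tails B \<equiv> concat (map (\<lambda>(m, a). rev a) B)"

fun ltr_minima_below :: "nat \<Rightarrow> nat list \<Rightarrow> nat list" where
  "ltr_minima_below b [] = []"
| "ltr_minima_below b (x # xs) =
     (if x < b then x # ltr_minima_below x xs else ltr_minima_below b xs)"

lemma ltr_minima_below_conv_filter:
  "ltr_minima_below b xs =
     map ((!) xs) (filter (\<lambda>i. xs ! i < b \<and> (\<forall>j<i. xs ! i < xs ! j)) [0..<length xs])"
proof (induction xs arbitrary: b)
  case (Cons x xs)
  have upt: "[0..<length (x # xs)] = 0 # map Suc [0..<length xs]"
    by (simp add: map_Suc_upt upt_conv_Cons del: upt_Suc)
  have "(\<forall>j<Suc i. xs ! i < (x # xs) ! j) \<longleftrightarrow> xs ! i < x \<and> (\<forall>j<i. xs ! i < xs ! j)" for i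
    by (auto simp: less_Suc_eq_0_disj)
  then show ?case
    using Cons.IH unfolding upt
    by (auto simp: filter_map comp_def intro!: arg_cong[where f = "map _"] filter_cong)
qed simp

lemma ltr_minima_eq_below:
  assumes "\<forall>x\<in>set xs. x < b"
  shows "ltr_minima xs = ltr_minima_below b xs"
proof -
  have comprehension: "concat (map (\<lambda>i. if P i then [f i] else []) ns) = map f (filter P ns)"
    for P and f :: "nat \<Rightarrow> nat" and ns :: "nat list"
    by (induction ns) auto
  show ?thesis
    unfolding ltr_minima_def is_ltr_min_def ltr_minima_below_conv_filter comprehension
    using assms by (auto intro!: arg_cong[where f = "map _"] filter_cong)
qed

lemma set_ltr_minima_below: "set (ltr_minima_below b xs) \<subseteq> set xs"
  by (induction xs arbitrary: b) auto

lemma ltr_minima_below_append_if_ge: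
  "\<forall>x\<in>set xs. b \<le> x \<Longrightarrow> ltr_minima_below b (xs @ ys) = ltr_minima_below b ys"
  by (induction xs) auto

lemma ltr_minima_below_append_if_less:
  "\<exists>x\<in>set xs. x < b \<Longrightarrow> \<exists>x zs. ltr_minima_below b (xs @ ys) = x # zs \<and> x \<in> set xs"
  by (induction xs arbitrary: b) (auto, metis)

text \<open>
  \<open>B = [(m\<^sub>1, a\<^sub>1), \<dots>, (m\<^sub>k, a\<^sub>k)]\<close> as in the statement: the \<open>m\<^sub>i\<close> are the left-to-right
  minima below \<open>b\<close> of \<open>flat_blocks B\<close> and \<open>a\<^sub>i\<close> the factor following \<open>m\<^sub>i\<close>.
\<close>

fun ltr_blocks :: "nat \<Rightarrow> (nat \<times> nat list) list \<Rightarrow> bool" where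
  "ltr_blocks b [] \<longleftrightarrow> True"
| "ltr_blocks b ((m, a) # B) \<longleftrightarrow> m < b \<and> (\<forall>x\<in>set a. m < x) \<and> ltr_blocks m B"

lemma ltr_blocks_if_ltr_minima_below:
  assumes "distinct (flat_blocks B)" "map fst B = ltr_minima_below b (flat_blocks B)"
  shows "ltr_blocks b B"
  using assms
proof (induction B arbitrary: b)
  case (Cons ma B)
  obtain m a where ma: "ma = (m, a)" by fastforce
  define T where "T = flat_blocks B"
  have dist: "m \<notin> set a" "m \<notin> set T" "set a \<inter> set T = {}" "distinct T"
    using Cons.prems(1) unfolding ma T_def by auto
  have word: "flat_blocks (ma # B) = m # a @ T"
    unfolding ma T_def by simp
  have "m < b"
  proof (rule ccontr)
    assume "\<not> m < b"
    then have "m # map fst B = ltr_minima_below b (a @ T)"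
      using Cons.prems(2) ma word by simp
    then have "m \<in> set (a @ T)"
      using set_ltr_minima_below by (metis list.set_intros(1) subsetD)
    with dist show False by simp
  qed
  moreover have "map fst (ma # B) = ltr_minima_below b (m # a @ T)"
    using Cons.prems(2) by (simp only: word)
  ultimately have minima: "map fst B = ltr_minima_below m (a @ T)"
    by (simp add: ma)
  have a_ge: "\<forall>x\<in>set a. m \<le> x"
  proof (rule ccontr)
    assume "\<not> (\<forall>x\<in>set a. m \<le> x)"
    then obtain x zs where x: "ltr_minima_below m (a @ T) = x # zs" "x \<in> set a"
      using ltr_minima_below_append_if_less[of a m T] by (auto simp: not_le)
    with minima obtain a' B' where "B = (x, a') # B'"
      by (cases B) auto
    then have "x \<in> set T" unfolding T_def by simp
    with x(2) dist show False by blast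
  qed
  with dist(1) have "\<forall>x\<in>set a. m < x"
    by (auto simp: le_less)
  moreover have "ltr_blocks m B"
    using Cons.IH[of m] dist(4) minima a_ge unfolding T_def
    by (simp add: ltr_minima_below_append_if_ge)
  ultimately show ?case using \<open>m < b\<close> ma by simp
qed simp

lemma ltr_blocks_append_Cons:
  assumes "ltr_blocks b (B1 @ (m, a) # B2)"
  shows "m < b \<and> (\<forall>z\<in>set (flat_blocks B1) \<union> set a. m < z)"
  using assms
proof (induction B1 arbitrary: b)
  case (Cons ma B1)
  obtain m0 a0 where ma: "ma = (m0, a0)" by fastforce
  with Cons.prems have "m0 < b" "\<forall>x\<in>set a0. m0 < x" "ltr_blocks m0 (B1 @ (m, a) # B2)"
    by simp_all
  with Cons.IH show ?case
    unfolding ma by fastforce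
qed simp

lemma ltr_blocks_sorted_minima: "ltr_blocks b B \<Longrightarrow> sorted_wrt (>) (b # map fst B)"
proof (induction B arbitrary: b)
  case (Cons ma B)
  obtain m a where ma: "ma = (m, a)" by fastforce
  with Cons.prems have "m < b" "ltr_blocks m B"
    by simp_all
  with Cons.IH have "m < b" "sorted_wrt (>) (m # map fst B)"
    by blast+
  then show ?case
    unfolding ma by (auto simp: sorted_wrt2)
qed simp

lemma SC_1_32_run_increasing_blocks:
  assumes "ltr_blocks m0 B" "\<forall>(m, a)\<in>set B. sorted_wrt (<) a"
    and "sorted_wrt (<) (m0 # a0)" "sorted (m0 # ms)"
  shows "SC_aux contains_1_32 (flat_blocks B) (rev a0 @ m0 # ms)
           = rev a0 @ rev_tails B @ rev (map fst B) @ m0 # ms"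
  using assms
proof (induction B arbitrary: m0 a0 ms)
  case (Cons ma B)
  obtain m a where ma: "ma = (m, a)" by fastforce
  with Cons.prems have m: "m < m0" "sorted_wrt (<) (m # a)" "ltr_blocks m B"
    by auto
  have sorted_ms: "sorted (m # m0 # ms)"
    using m(1) Cons.prems(4) by auto
  have "SC_aux contains_1_32 (m # a @ flat_blocks B) (rev a0 @ m0 # ms)
          = rev a0 @ SC_aux contains_1_32 (a @ flat_blocks B) (m # m0 # ms)"
    using Cons.prems(3,4) m(1) by (rule SC_1_32_new_minimum_pops)
  also have "\<dots> = rev a0 @ SC_aux contains_1_32 (flat_blocks B) (rev a @ m # m0 # ms)"
    using m(2) sorted_ms by (simp add: SC_1_32_push_increasing)
  also have "\<dots> = rev a0 @ rev a @ rev_tails B @ rev (map fst B) @ m # m0 # ms"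
    using Cons.IH[OF m(3) _ m(2) sorted_ms] Cons.prems(2) by simp
  finally show ?case
    unfolding ma by simp
qed simp

lemma SC_1_32_increasing_blocks:
  assumes "ltr_blocks b B" "\<forall>(m, a)\<in>set B. sorted_wrt (<) a"
  shows "SC contains_1_32 (flat_blocks B) = rev_tails B @ rev (map fst B)"
proof (cases B)
  case (Cons ma B')
  obtain m a where ma: "ma = (m, a)" by fastforce
  with assms Cons have m:
    "sorted_wrt (<) (m # a)" "ltr_blocks m B'" "\<forall>(m, a)\<in>set B'. sorted_wrt (<) a"
    by auto
  have "SC contains_1_32 (flat_blocks B) = SC_aux contains_1_32 (a @ flat_blocks B') [m]"
    unfolding Cons ma SC_def by simp
  also have "\<dots> = SC_aux contains_1_32 (flat_blocks B') (rev a @ [m])"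
    using SC_1_32_push_increasing[OF m(1), of "[]"] by simp
  also have "\<dots> = rev a @ rev_tails B' @ rev (map fst B') @ [m]"
    using SC_1_32_run_increasing_blocks[OF m(2,3,1), of "[]"] by simp
  finally show ?thesis
    unfolding Cons ma by simp
qed (simp add: SC_def)

lemma SC_1_32_contains_231_if_descent:
  assumes "\<forall>z\<in>set st. m < z" "sorted_wrt (<) (m # p @ [x])" "m < y" "y < x"
  shows "contains_231 (SC_aux contains_1_32 (m # p @ x # y # rest) st)"
proof -
  obtain P1 S1 where 1: "SC_aux contains_1_32 (m # (p @ [x]) @ y # rest) st
                           = P1 @ SC_aux contains_1_32 ((p @ [x]) @ y # rest) (m # S1)"
      and sorted_S1: "sorted (m # S1)"
    using SC_1_32_new_minimum_arrives[OF assms(1)] by blast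
  have 2: "SC_aux contains_1_32 ((p @ [x]) @ y # rest) (m # S1)
             = SC_aux contains_1_32 (y # rest) (x # rev p @ m # S1)"
    using SC_1_32_push_increasing[OF assms(2) sorted_S1] by simp
  obtain P2 x' S where 3: "SC_aux contains_1_32 (y # rest) (x # rev p @ m # S1)
                             = P2 @ SC_aux contains_1_32 rest (y # x' # S)"
      and "y < x'" "m \<in> set S"
    using SC_1_32_descent[OF assms(2) sorted_S1 assms(3,4)] by blast
  have "SC_aux contains_1_32 (m # p @ x # y # rest) st
          = (P1 @ P2) @ SC_aux contains_1_32 rest (y # x' # S)"
    using 1 2 3 by simp
  moreover have "subseq [y, x', m] (y # x' # S)"
    using \<open>m \<in> set S\<close> by (simp add: subseq_singleton_left)
  then have "subseq [y, x', m] (SC_aux contains_1_32 rest (y # x' # S))"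
    using subseq_SC_aux subseq_order.trans by blast
  ultimately show ?thesis
    using assms(3) \<open>y < x'\<close> by (auto intro: contains_231I subseq_drop_many)
qed

lemma SC_1_32_contains_231_if_not_increasing:
  assumes "ltr_blocks b B" "distinct (flat_blocks B)" "(m, a) \<in> set B" "\<not> sorted_wrt (<) a"
  shows "contains_231 (SC contains_1_32 (flat_blocks B))"
proof -
  obtain B1 B2 where B: "B = B1 @ (m, a) # B2"
    using assms(3) by (metis split_list)
  obtain p x y q where a: "a = p @ x # y # q" "sorted_wrt (<) (p @ [x])" "y \<le> x"
    using not_sorted_wrt_less_imp_descent[OF assms(4)] by blast
  define rest where "rest = q @ flat_blocks B2"
  have word: "flat_blocks B = flat_blocks B1 @ m # p @ x # y # rest"
    unfolding B a rest_def by simp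
  have m_less: "\<forall>z\<in>set (flat_blocks B1) \<union> set a. m < z"
    using ltr_blocks_append_Cons[OF assms(1)[unfolded B]] by blast
  then have "m < y" "sorted_wrt (<) (m # p @ [x])"
    using a(1,2) by auto
  moreover have "y < x"
    using assms(2) a(3) unfolding word by auto
  moreover obtain P S where
      run: "SC contains_1_32 (flat_blocks B) = P @ SC_aux contains_1_32 (m # p @ x # y # rest) S"
      and "set S \<subseteq> set (flat_blocks B1)"
    using SC_aux_append[of contains_1_32 "flat_blocks B1" "m # p @ x # y # rest" "[]"]
    unfolding SC_def word by (metis Un_empty_right empty_set)
  moreover from this(2) m_less have "\<forall>z\<in>set S. m < z"
    by blast
  ultimately have "contains_231 (SC_aux contains_1_32 (m # p @ x # y # rest) S)"
    using SC_1_32_contains_231_if_descent by blast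
  then show ?thesis
    unfolding run using contains_231_mono subseq_drop_many subseq_order.refl by blast
qed

lemma sorted_wrt_greater_append_if_not_contains_231:
  assumes "sorted_wrt (>) ys" "distinct (xs @ ys)" "\<forall>x\<in>set xs. m < x" "m \<in> set zs"
    and "\<not> contains_231 (xs @ ys @ zs)"
  shows "sorted_wrt (>) (xs @ ys)"
  using assms(2-5)
proof (induction xs)
  case (Cons x xs)
  have "v < x" if "v \<in> set (xs @ ys)" for v
  proof (rule ccontr)
    assume "\<not> v < x"
    with that Cons.prems(1) have "x < v" by auto
    moreover have "subseq ([v] @ [m]) ((xs @ ys) @ zs)"
      using that Cons.prems(3) by (intro list_emb_append_mono) (simp_all add: subseq_singleton_left)
    then have "subseq [x, v, m] (x # xs @ ys @ zs)"
      by simp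
    ultimately show False
      using Cons.prems(2,4) by (auto intro: contains_231I)
  qed
  moreover have "\<not> contains_231 (xs @ ys @ zs)"
    using Cons.prems(4) contains_231_mono[of "xs @ ys @ zs" "x # xs @ ys @ zs"] by auto
  ultimately show ?case
    using Cons.IH Cons.prems(1-3) by auto
qed (use assms(1) in simp)

lemma sorted_rev_tails_if_not_contains_231:
  assumes "ltr_blocks b B" "distinct (flat_blocks B)"
    and "\<not> contains_231 (rev_tails B @ rev (map fst B) @ ms)"
  shows "sorted_wrt (>) (rev_tails B)"
  using assms
proof (induction B arbitrary: b ms)
  case (Cons ma B)
  obtain m a where ma: "ma = (m, a)" by fastforce
  with Cons.prems(1) have a_greater: "\<forall>x\<in>set (rev a). m < x" and "ltr_blocks m B"
    by simp_all
  define T where "T = flat_blocks B"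
  have dist: "distinct T" "distinct a" "set a \<inter> set T = {}"
    using Cons.prems(2) unfolding ma T_def by auto
  have split_output: "rev_tails (ma # B) @ rev (map fst (ma # B)) @ ms
                  = rev a @ rev_tails B @ rev (map fst B) @ m # ms"
    unfolding ma by simp
  then have "\<not> contains_231 (rev_tails B @ rev (map fst B) @ m # ms)"
    using Cons.prems(3) contains_231_mono subseq_drop_many subseq_order.refl by metis
  with Cons.IH \<open>ltr_blocks m B\<close> dist(1) have sorted_B: "sorted_wrt (>) (rev_tails B)"
    unfolding T_def by blast
  then have "distinct (rev_tails B)"
    by (metis distinct_rev sorted_wrt_rev strict_sorted_iff)
  moreover have "set (rev_tails B) \<subseteq> set T"
    unfolding T_def by auto
  ultimately have "distinct (rev a @ rev_tails B)"
    using dist by auto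
  from sorted_wrt_greater_append_if_not_contains_231[OF sorted_B this a_greater, of "rev (map fst B) @ m # ms"]
  have "sorted_wrt (>) (rev a @ rev_tails B)"
    using Cons.prems(3) unfolding split_output by simp
  then show ?case
    unfolding ma by simp
qed simp

lemma increasing_blocks_if_sorted_rev_tails:
  "sorted_wrt (>) (rev_tails B) \<Longrightarrow> \<forall>(m, a)\<in>set B. sorted_wrt (<) a"
  by (induction B) (auto simp: sorted_wrt_append sorted_wrt_rev)

lemma SC_1_32_not_contains_231_iff:
  assumes "ltr_blocks b B" "distinct (flat_blocks B)"
  shows "\<not> contains_231 (SC contains_1_32 (flat_blocks B)) \<longleftrightarrow> sorted_wrt (>) (rev_tails B)"
proof
  assume avoids: "\<not> contains_231 (SC contains_1_32 (flat_blocks B))"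
  then have "\<forall>(m, a)\<in>set B. sorted_wrt (<) a"
    using SC_1_32_contains_231_if_not_increasing[OF assms] by blast
  with avoids have "\<not> contains_231 (rev_tails B @ rev (map fst B) @ [])"
    using SC_1_32_increasing_blocks[OF assms(1)] by simp
  then show "sorted_wrt (>) (rev_tails B)"
    using sorted_rev_tails_if_not_contains_231[OF assms] by blast
next
  assume sorted: "sorted_wrt (>) (rev_tails B)"
  have "sorted_wrt (>) (map fst B)"
    using ltr_blocks_sorted_minima[OF assms(1)] by simp
  then have "sorted_wrt (\<ge>) (map fst B)"
    by (rule sorted_wrt_mono_rel[rotated]) simp
  then have "sorted (rev (map fst B))"
    by (simp add: sorted_wrt_rev)
  with sorted show "\<not> contains_231 (SC contains_1_32 (flat_blocks B))"
    using SC_1_32_increasing_blocks[OF assms(1) increasing_blocks_if_sorted_rev_tails[OF sorted]]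
    by (simp add: not_contains_231_decreasing_increasing)
qed

theorem mainTheorem10:
  fixes n :: nat and \<tau> :: "nat list" and B :: "(nat \<times> nat list) list"
  assumes "n \<ge> 1"
    and "\<tau> \<in> permutations_of_set {1..n}"
    and "map fst B = ltr_minima \<tau>"
    and "concat (map (\<lambda>(m, a). m # a) B) = \<tau>"
  shows "\<tau> \<in> Sort_SC n contains_1_32 \<longleftrightarrow>
         sorted_wrt (>) (concat (map (\<lambda>(m, a). rev a) B))"
proof -
  have "distinct \<tau>" "\<forall>x\<in>set \<tau>. x < Suc n"
    using assms(2) by (auto simp: permutations_of_set_def)
  then have "distinct (flat_blocks B)" "map fst B = ltr_minima_below (Suc n) (flat_blocks B)"
    using assms(3,4) ltr_minima_eq_below by auto
  then have "ltr_blocks (Suc n) B"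
    by (rule ltr_blocks_if_ltr_minima_below)
  with \<open>distinct (flat_blocks B)\<close> show ?thesis
    using Sort_SC_iff[OF assms(2)] SC_1_32_not_contains_231_iff assms(4) by metis
qed

end
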